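(* $\mathcal{TC}(\mathrm{RL}_1^P)=\mathrm{FIN}$, the family of all finite languages.
   Context: A right-linear grammar is $G=(N,T,P,S)$ with rules $A\to wB$ or $A\to w$ ($A,B\in N$, $w\in T^*$). For a regular language $L$, $\mathrm{Prod}_{RL}(L)$ is the minimum of $|P|$ over all right-linear grammars generating $L$, and $\mathrm{RL}_n^P=\{L\text{ regular}:\mathrm{Prod}_{RL}(L)\le n\}$. A tree-controlled grammar is a quintuple $G=(N,T,P,S,R)$ where $(N,T,P,S)$ is a context-free grammar whose rules are all non-erasing, except that $S\to\lambda$ is allowed if $S$ does not occur on the right-hand side of any rule, and $R\subseteq (N\cup T)^*$ is a regular control language. The word of level $j$ of a derivation tree is the word of all nodes of depth $j$ read left to right. $L(G)$ consists of all $z\in T^*$ having a derivation tree with yield $z$ such that the words of all levels except the last belong to $R$. For a family $\mathcal F$ of regular languages, $\mathcal{TC}(\mathcal F)$ is the family of languages generated by tree-controlled grammars with control language in $\mathcal F$. *)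

theory Defs
  imports Main
begin

(* Grammar symbols: nonterminals are natural numbers (any finite nonterminal
   set can be renamed into nat), terminals are of an arbitrary type 't. *)
datatype 't sym = NT nat | Tm 't

(* G = (N, T, P, S); a rule (A, w, None) is A -> w, a rule (A, w, Some B) is A -> w B *)
type_synonym 'b rlg = "nat set \<times> 'b set \<times> (nat \<times> 'b list \<times> nat option) set \<times> nat"

definition rlg_wf :: "'b rlg \<Rightarrow> bool" where
  "rlg_wf G = (case G of (N, T, P, S) \<Rightarrow>
     finite N \<and> finite T \<and> finite P \<and> S \<in> N \<and>
     (\<forall>(A, w, B) \<in> P. A \<in> N \<and> set w \<subseteq> T \<and> (\<forall>C. B = Some C \<longrightarrow> C \<in> N)))"

inductive rl_derives :: "(nat \<times> 'b list \<times> nat option) set \<Rightarrow> nat \<Rightarrow> 'b list \<Rightarrow> bool"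
  for P where
  term_rule: "(A, w, None) \<in> P \<Longrightarrow> rl_derives P A w"
| cont_rule: "(A, u, Some B) \<in> P \<Longrightarrow> rl_derives P B v \<Longrightarrow> rl_derives P A (u @ v)"

definition rl_lang :: "'b rlg \<Rightarrow> 'b list set" where
  "rl_lang G = (case G of (N, T, P, S) \<Rightarrow> {w. rl_derives P S w})"

definition rl_prods :: "'b rlg \<Rightarrow> (nat \<times> 'b list \<times> nat option) set" where
  "rl_prods G = (case G of (N, T, P, S) \<Rightarrow> P)"

definition regular :: "'b list set \<Rightarrow> bool" where
  "regular L = (\<exists>G. rlg_wf G \<and> rl_lang G = L)"

definition Prod_RL :: "'b list set \<Rightarrow> nat" where
  "Prod_RL L = (LEAST k. \<exists>G. rlg_wf G \<and> rl_lang G = L \<and> card (rl_prods G) = k)"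

definition RLP :: "nat \<Rightarrow> 'b list set set" where
  "RLP n = {L. regular L \<and> Prod_RL L \<le> n}"

(* Inner A ts: a node labelled by nonterminal A whose children are ts;
   Inner A [] represents an application of the rule A -> lambda. *)
datatype 't dtree = Leaf 't | Inner nat "'t dtree list"

fun droot :: "'t dtree \<Rightarrow> 't sym" where
  "droot (Leaf a) = Tm a"
| "droot (Inner A ts) = NT A"

fun is_dtree :: "(nat \<times> 't sym list) set \<Rightarrow> 't set \<Rightarrow> 't dtree \<Rightarrow> bool" where
  "is_dtree P T (Leaf a) = (a \<in> T)"
| "is_dtree P T (Inner A ts) = ((A, map droot ts) \<in> P \<and> (\<forall>t \<in> set ts. is_dtree P T t))"

fun dyield :: "'t dtree \<Rightarrow> 't list" where
  "dyield (Leaf a) = [a]"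
| "dyield (Inner A ts) = concat (map dyield ts)"

(* height = depth of the last level (an inner node with no children, i.e. a
   lambda-rule, has a level 1 consisting of the empty word lambda) *)
fun dheight :: "'t dtree \<Rightarrow> nat" where
  "dheight (Leaf a) = 0"
| "dheight (Inner A ts) = Suc (foldr max (map dheight ts) 0)"

fun level :: "nat \<Rightarrow> 't dtree \<Rightarrow> 't sym list" where
  "level 0 (Leaf a) = [Tm a]"
| "level 0 (Inner A ts) = [NT A]"
| "level (Suc j) (Leaf a) = []"
| "level (Suc j) (Inner A ts) = concat (map (level j) ts)"

type_synonym 't tcg = "nat set \<times> 't set \<times> (nat \<times> 't sym list) set \<times> nat \<times> 't sym list set"

definition sym_in :: "nat set \<Rightarrow> 't set \<Rightarrow> 't sym \<Rightarrow> bool" where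
  "sym_in N T x = (case x of NT B \<Rightarrow> B \<in> N | Tm a \<Rightarrow> a \<in> T)"

definition tcg_wf :: "'t tcg \<Rightarrow> bool" where
  "tcg_wf G = (case G of (N, T, P, S, R) \<Rightarrow>
     finite N \<and> finite T \<and> finite P \<and> S \<in> N \<and>
     (\<forall>(A, w) \<in> P. A \<in> N \<and> (\<forall>x \<in> set w. sym_in N T x) \<and>
        (w = [] \<longrightarrow> A = S \<and> (\<forall>(B, u) \<in> P. NT S \<notin> set u))) \<and>
     R \<subseteq> {w. \<forall>x \<in> set w. sym_in N T x} \<and> regular R)"

definition tc_control :: "'t tcg \<Rightarrow> 't sym list set" where
  "tc_control G = (case G of (N, T, P, S, R) \<Rightarrow> R)"

definition tc_lang :: "'t tcg \<Rightarrow> 't list set" where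
  "tc_lang G = (case G of (N, T, P, S, R) \<Rightarrow>
     {z. \<exists>t. is_dtree P T t \<and> droot t = NT S \<and> dyield t = z \<and>
            (\<forall>j < dheight t. level j t \<in> R)})"

definition TC :: "'t sym list set set \<Rightarrow> 't list set set" where
  "TC F = {L. \<exists>G. tcg_wf G \<and> tc_control G \<in> F \<and> tc_lang G = L}"

end

theory Submission
  imports Defs
begin

text \<open>A right-linear grammar with a single production cannot use a rule \<open>A \<rightarrow> w B\<close> in a
  terminating derivation, so a control language in \<open>RL\<^sub>1\<^sup>P\<close> contains at most one word. In a
  derivation tree the level-0 word is the start symbol \<open>S\<close>, hence every non-final level is \<open>S\<close>:
  the tree is a chain \<open>S \<rightarrow> S \<rightarrow> \<dots> \<rightarrow> S \<rightarrow> z\<close> and its yield \<open>z\<close> is the right-hand side of a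
  terminal rule \<open>S \<rightarrow> z\<close>. Conversely, a finite \<open>L\<close>
  is generated with the rules \<open>S \<rightarrow> w\<close> (\<open>w \<in> L\<close>) and control language \<open>{S}\<close>.\<close>

lemma rl_derives_card_le_1:
  assumes "finite P" "card P \<le> 1" "rl_derives P A v"
  shows "(A, v, None) \<in> P"
  using assms(3)
proof (induction rule: rl_derives.induct)
  case (term_rule A w)
  then show ?case .
next
  case (cont_rule A u B v)
  with assms(1,2) show ?case
    by (metis card_le_Suc0_iff_eq One_nat_def option.distinct(1) prod.inject)
qed

lemma Prod_RL_attained:
  assumes "regular L"
  shows "\<exists>G. rlg_wf G \<and> rl_lang G = L \<and> card (rl_prods G) = Prod_RL L"
proof -
  from assms obtain G where "rlg_wf G" "rl_lang G = L" by (auto simp: regular_def)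
  then have "\<exists>k G. rlg_wf G \<and> rl_lang G = L \<and> card (rl_prods G) = k" by blast
  then show ?thesis unfolding Prod_RL_def by (rule LeastI_ex)
qed

lemma RLP_1_subsingleton:
  assumes "R \<in> RLP 1" "x \<in> R" "y \<in> R"
  shows "x = y"
proof -
  from assms(1) have "regular R" "Prod_RL R \<le> 1" by (auto simp: RLP_def)
  then obtain N T P S where wf: "rlg_wf (N, T, P, S)" and lang: "rl_lang (N, T, P, S) = R"
    and card: "card P \<le> 1"
    using Prod_RL_attained by (fastforce simp: rl_prods_def)
  have fin: "finite P" using wf by (simp add: rlg_wf_def)
  from assms(2,3) lang have "(S, x, None) \<in> P" "(S, y, None) \<in> P"
    using rl_derives_card_le_1[OF fin card] by (auto simp: rl_lang_def)
  with fin card show ?thesis by (metis card_le_Suc0_iff_eq One_nat_def prod.inject)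
qed

lemma singleton_in_RLP_1: "{w} \<in> RLP 1"
proof -
  let ?P = "{(0, w, None)}"
  let ?G = "({0}, set w, ?P, 0)"
  have wf: "rlg_wf ?G" by (simp add: rlg_wf_def)
  have "rl_derives ?P 0 v \<longleftrightarrow> v = w" for v
    using rl_derives_card_le_1[of ?P 0 v] by (auto intro: rl_derives.term_rule)
  then have lang: "rl_lang ?G = {w}" by (auto simp: rl_lang_def)
  have "Prod_RL {w} \<le> 1"
    unfolding Prod_RL_def
    by (rule Least_le, rule exI[of _ ?G]) (use wf lang in \<open>simp add: rl_prods_def\<close>)
  moreover have "regular {w}" using wf lang by (auto simp: regular_def)
  ultimately show ?thesis by (simp add: RLP_def)
qed

lemma level_0: "level 0 t = [droot t]"
  by (cases t) auto

lemma level_1_Inner: "level 1 (Inner A ts) = map droot ts"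
  by (induction ts) (auto simp: level_0)

lemma dheight_child_less: "t \<in> set ts \<Longrightarrow> dheight t < dheight (Inner A ts)"
proof -
  assume "t \<in> set ts"
  then have "dheight t \<le> foldr max (map dheight ts) 0" by (induction ts) auto
  then show ?thesis by simp
qed

lemma rule_of_constant_levels:
  assumes "is_dtree P T t" "droot t = NT S" "\<forall>j < dheight t. level j t = [NT S]"
  shows "(S, map Tm (dyield t)) \<in> P"
  using assms
proof (induction t)
  case (Leaf a)
  then show ?case by simp
next
  case (Inner A ts)
  then have rule: "(S, map droot ts) \<in> P" by auto
  show ?case
  proof (cases "\<forall>t \<in> set ts. \<exists>a. t = Leaf a")
    case True
    then have "map droot ts = map Tm (dyield (Inner A ts))" by (induction ts) auto
    with rule show ?thesis by simp
  next
    case False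
    then obtain A' us where "Inner A' us \<in> set ts" by (metis dtree.exhaust)
    then have "1 < dheight (Inner A ts)" using dheight_child_less by fastforce
    then have "map droot ts = [NT S]" using Inner.prems(3) level_1_Inner by metis
    then obtain t' where ts: "ts = [t']" and root: "droot t' = NT S" by (cases ts) auto
    have "\<forall>j < dheight t'. level j t' = [NT S]"
    proof (intro allI impI)
      fix j assume "j < dheight t'"
      then have "Suc j < dheight (Inner A ts)" using ts by simp
      then have "level (Suc j) (Inner A ts) = [NT S]" using Inner.prems(3) by blast
      then show "level j t' = [NT S]" using ts by simp
    qed
    with Inner.IH Inner.prems(1) ts root have "(S, map Tm (dyield t')) \<in> P" by simp
    with ts show ?thesis by simp
  qed
qed

lemma tc_lang_subsingleton_control:
  assumes "\<forall>x \<in> R. \<forall>y \<in> R. x = y"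
  shows "tc_lang (N, T, P, S, R) \<subseteq> {z. (S, map Tm z) \<in> P}"
proof
  fix z assume "z \<in> tc_lang (N, T, P, S, R)"
  then obtain t where t: "is_dtree P T t" "droot t = NT S" "dyield t = z"
    and levels: "\<forall>j < dheight t. level j t \<in> R"
    by (auto simp: tc_lang_def)
  have "0 < dheight t" using t(2) by (cases t) auto
  then have "[NT S] \<in> R" using levels t(2) level_0 by metis
  then have "\<forall>j < dheight t. level j t = [NT S]" using levels assms by blast
  with t show "z \<in> {z. (S, map Tm z) \<in> P}" using rule_of_constant_levels by blast
qed

lemma inj_map_Tm: "inj (map Tm)"
  by (rule inj_mapI) (auto intro: injI)

lemma finite_tc_lang_subsingleton_control:
  assumes "finite P" "\<forall>x \<in> R. \<forall>y \<in> R. x = y"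
  shows "finite (tc_lang (N, T, P, S, R))"
proof -
  have "tc_lang (N, T, P, S, R) \<subseteq> map Tm -` (snd ` P)"
    using tc_lang_subsingleton_control[OF assms(2)] by force
  moreover have "finite (map Tm -` (snd ` P))"
    using assms(1) by (intro finite_vimageI finite_imageI inj_map_Tm)
  ultimately show ?thesis by (rule finite_subset)
qed

definition listing_tcg :: "'t list set \<Rightarrow> 't tcg" where
  "listing_tcg L = ({0}, \<Union> (set ` L), (\<lambda>w. (0, map Tm w)) ` L, 0, {[NT 0]})"

lemma tcg_wf_listing_tcg:
  assumes "finite L"
  shows "tcg_wf (listing_tcg L)"
proof -
  have "regular {[NT 0 :: 't sym]}" using singleton_in_RLP_1 unfolding RLP_def by blast
  with assms show ?thesis
    unfolding tcg_wf_def listing_tcg_def prod.case by (auto simp: sym_in_def)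
qed

lemma tc_lang_listing_tcg: "tc_lang (listing_tcg L) = L"
proof
  show "tc_lang (listing_tcg L) \<subseteq> L"
  proof
    fix z assume "z \<in> tc_lang (listing_tcg L)"
    then have "(0, map Tm z) \<in> (\<lambda>w. (0, map Tm w)) ` L"
      using tc_lang_subsingleton_control[of "{[NT 0]}"] unfolding listing_tcg_def by blast
    then obtain w where "w \<in> L" "map Tm z = map Tm w" by blast
    then show "z \<in> L" using inj_map_Tm by (metis injD)
  qed
next
  show "L \<subseteq> tc_lang (listing_tcg L)"
  proof
    fix w assume w: "w \<in> L"
    let ?t = "Inner 0 (map Leaf w)"
    have "dyield ?t = w" by (induction w) auto
    moreover have "dheight ?t = 1" by (induction w) auto
    moreover have "is_dtree ((\<lambda>w. (0, map Tm w)) ` L) (\<Union> (set ` L)) ?t"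
      using w by (auto simp: comp_def)
    ultimately show "w \<in> tc_lang (listing_tcg L)"
      unfolding tc_lang_def listing_tcg_def prod.case by (intro CollectI exI[of _ ?t]) auto
  qed
qed

theorem mainTheorem5:
  shows "TC (RLP 1) = {L :: 't list set. finite L}"
proof (intro equalityI subsetI)
  fix L :: "'t list set" assume "L \<in> TC (RLP 1)"
  then obtain N T P S R where "tcg_wf (N, T, P, S, R)" "R \<in> RLP 1" "tc_lang (N, T, P, S, R) = L"
    by (auto simp: TC_def tc_control_def)
  then show "L \<in> {L. finite L}"
    using finite_tc_lang_subsingleton_control RLP_1_subsingleton by (fastforce simp: tcg_wf_def)
next
  fix L :: "'t list set" assume "L \<in> {L. finite L}"
  then have "tcg_wf (listing_tcg L)" "tc_control (listing_tcg L) \<in> RLP 1"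
    using tcg_wf_listing_tcg singleton_in_RLP_1 by (auto simp: listing_tcg_def tc_control_def)
  then show "L \<in> TC (RLP 1)"
    using tc_lang_listing_tcg unfolding TC_def by blast
qed

end
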